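(* Let $F:\mathcal{P}(V,A)\to S_2(A)$ be a weakly viable consular election rule satisfying SPP and SPO. Then $F$ is unanimous: for every profile $P$ and $a\in A$, if $a$ is ranked first by every voter in $P$, then $a\in F(P)$.
   Context: $V$ is a finite nonempty set of voters, $A$ a finite set of alternatives; a profile $P$ assigns to each voter $i$ a linear order $P_i$ on $A$; $P_i'P_{-i}$ replaces voter $i$'s order by $P_i'$. $S_2(A)$ is the set of 2-element subsets of $A$; a consular election rule is a map $F:\mathcal{P}(V,A)\to S_2(A)$. SPO: for all $P$, $i$, $P_i'$, $\mathrm{best}(P_i,F(P))\succeq_i\mathrm{best}(P_i,F(P_i'P_{-i}))$; SPP: same with $\mathrm{worst}$, where $\mathrm{best}(P_i,W)$, $\mathrm{worst}(P_i,W)$ are the $P_i$-best and $P_i$-worst elements of $W$. Weakly viable: every $a\in A$ lies in $F(P)$ for some profile $P$. *)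

theory Defs
  imports Main
begin

text \<open>A preference is a linear order on the alternative set A, given as a (reflexive)
relation r with (x,y) \<in> r meaning "y is at least as good as x", i.e. x \<preceq> y.
A profile assigns a linear order on A to every voter in V; it is extensional
(the empty relation outside V) so that profiles are determined by their values on V.\<close>

definition profile :: "'v set \<Rightarrow> 'a set \<Rightarrow> ('v \<Rightarrow> 'a rel) \<Rightarrow> bool" where
  "profile V A P \<longleftrightarrow> (\<forall>i\<in>V. linear_order_on A (P i)) \<and> (\<forall>i. i \<notin> V \<longrightarrow> P i = {})"

definition S2 :: "'a set \<Rightarrow> 'a set set" where
  "S2 A = {W. W \<subseteq> A \<and> card W = 2}"

definition consular_rule :: "'v set \<Rightarrow> 'a set \<Rightarrow> (('v \<Rightarrow> 'a rel) \<Rightarrow> 'a set) \<Rightarrow> bool" where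
  "consular_rule V A F \<longleftrightarrow> (\<forall>P. profile V A P \<longrightarrow> F P \<in> S2 A)"

definition best :: "'a rel \<Rightarrow> 'a set \<Rightarrow> 'a" where
  "best r W = (THE x. x \<in> W \<and> (\<forall>y\<in>W. (y, x) \<in> r))"

definition worst :: "'a rel \<Rightarrow> 'a set \<Rightarrow> 'a" where
  "worst r W = (THE x. x \<in> W \<and> (\<forall>y\<in>W. (x, y) \<in> r))"

text \<open>SPO: no voter can obtain a strictly better best element of the outcome by misreporting.\<close>
definition SPO :: "'v set \<Rightarrow> 'a set \<Rightarrow> (('v \<Rightarrow> 'a rel) \<Rightarrow> 'a set) \<Rightarrow> bool" where
  "SPO V A F \<longleftrightarrow> (\<forall>P i Pi'. profile V A P \<longrightarrow> i \<in> V \<longrightarrow> linear_order_on A Pi' \<longrightarrow>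
      (best (P i) (F (P(i := Pi'))), best (P i) (F P)) \<in> P i)"

definition SPP :: "'v set \<Rightarrow> 'a set \<Rightarrow> (('v \<Rightarrow> 'a rel) \<Rightarrow> 'a set) \<Rightarrow> bool" where
  "SPP V A F \<longleftrightarrow> (\<forall>P i Pi'. profile V A P \<longrightarrow> i \<in> V \<longrightarrow> linear_order_on A Pi' \<longrightarrow>
      (worst (P i) (F (P(i := Pi'))), worst (P i) (F P)) \<in> P i)"

definition weakly_viable :: "'v set \<Rightarrow> 'a set \<Rightarrow> (('v \<Rightarrow> 'a rel) \<Rightarrow> 'a set) \<Rightarrow> bool" where
  "weakly_viable V A F \<longleftrightarrow> (\<forall>a\<in>A. \<exists>P. profile V A P \<and> a \<in> F P)"

definition unanimous :: "'v set \<Rightarrow> 'a set \<Rightarrow> (('v \<Rightarrow> 'a rel) \<Rightarrow> 'a set) \<Rightarrow> bool" where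
  "unanimous V A F \<longleftrightarrow> (\<forall>P a. profile V A P \<longrightarrow> a \<in> A \<longrightarrow>
      (\<forall>i\<in>V. \<forall>b\<in>A. (b, a) \<in> P i) \<longrightarrow> a \<in> F P)"

end

theory Submission
  imports Defs
begin

text \<open>If voter j ranks a first and a is elected at some profile, then a stays elected when j
  switches to her true ranking: otherwise j, whose true preferences are those of the new profile,
  could report her old ranking and obtain a as best consul, violating SPO. Starting from a profile
  electing a (weak viability) and switching the voters one at a time to a profile where everybody
  ranks a first proves unanimity.\<close>

lemma linear_order_on_antisym: "linear_order_on A r \<Longrightarrow> antisym r"
  unfolding linear_order_on_def partial_order_on_def by blast

lemma best_eqI_top:
  assumes "linear_order_on A r" and "a \<in> W" and "W \<subseteq> A" and "\<forall>b\<in>A. (b, a) \<in> r"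
  shows "best r W = a"
  unfolding best_def
proof (rule the_equality)
  show "a \<in> W \<and> (\<forall>y\<in>W. (y, a) \<in> r)" using assms(2-4) by blast
next
  fix x assume "x \<in> W \<and> (\<forall>y\<in>W. (y, x) \<in> r)"
  with assms have "(a, x) \<in> r" and "(x, a) \<in> r" by blast+
  with linear_order_on_antisym[OF assms(1)] show "x = a" by (meson antisymD)
qed

lemma best_in_finite:
  assumes r: "linear_order_on A r" and "finite W" and "W \<noteq> {}" and "W \<subseteq> A"
  shows "best r W \<in> W"
proof -
  have refl: "refl_on A r" and trans: "trans r" and total: "total_on A r"
    using r unfolding linear_order_on_def partial_order_on_def preorder_on_def by blast+
  have "\<exists>z\<in>W. \<forall>u\<in>W. (u, z) \<in> r"
    using assms(2-4)
  proof (induction W rule: finite_ne_induct)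
    case (singleton x)
    with refl show ?case by (simp add: refl_onD)
  next
    case (insert x W)
    then obtain z where z: "z \<in> W" "\<forall>u\<in>W. (u, z) \<in> r" by blast
    have "x \<in> A" "z \<in> A" using insert.prems z(1) by auto
    with refl total have "(x, x) \<in> r" "(x, z) \<in> r \<or> (z, x) \<in> r"
      by (auto simp: refl_onD total_on_def) (metis refl_onD)
    then consider "(x, z) \<in> r" | "(z, x) \<in> r" by blast
    then show ?case
    proof cases
      case 1
      with z show ?thesis by blast
    next
      case 2
      with z \<open>(x, x) \<in> r\<close> trans have "\<forall>u\<in>insert x W. (u, x) \<in> r"
        by (blast dest: transD)
      then show ?thesis by blast
    qed
  qed
  then obtain z where z: "z \<in> W" "\<forall>u\<in>W. (u, z) \<in> r" by blast
  have "best r W = z"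
    unfolding best_def
    using z linear_order_on_antisym[OF r] by (intro the_equality) (auto dest: antisymD)
  with z show ?thesis by simp
qed

lemma best_in_S2: "linear_order_on A r \<Longrightarrow> W \<in> S2 A \<Longrightarrow> best r W \<in> W"
  unfolding S2_def by (rule best_in_finite) (auto intro: card_ge_0_finite)

lemma profile_update:
  "profile V A P \<Longrightarrow> linear_order_on A r \<Longrightarrow> i \<in> V \<Longrightarrow> profile V A (P(i := r))"
  unfolding profile_def by auto

lemma SPO_top_stays_elected:
  assumes F: "consular_rule V A F" and spo: "SPO V A F"
    and R: "profile V A R" and aR: "a \<in> F R" and j: "j \<in> V"
    and Pj: "linear_order_on A Pj" and top: "\<forall>b\<in>A. (b, a) \<in> Pj"
  shows "a \<in> F (R(j := Pj))"
proof -
  let ?R' = "R(j := Pj)"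
  have R': "profile V A ?R'" using profile_update[OF R Pj j] .
  have "linear_order_on A (R j)" using R j unfolding profile_def by auto
  then have "(best Pj (F (?R'(j := R j))), best Pj (F ?R')) \<in> Pj"
    using spo R' j unfolding SPO_def by fastforce
  moreover have "best Pj (F (?R'(j := R j))) = a"
    using F R aR unfolding consular_rule_def S2_def by (auto intro: best_eqI_top[OF Pj _ _ top])
  moreover have best_in: "best Pj (F ?R') \<in> F ?R'"
    using F R' best_in_S2[OF Pj] unfolding consular_rule_def by blast
  moreover have "F ?R' \<subseteq> A" using F R' unfolding consular_rule_def S2_def by blast
  ultimately have "best Pj (F ?R') = a"
    using top linear_order_on_antisym[OF Pj] by (metis antisymD subsetD)
  with best_in show ?thesis by simp
qed

lemma SPO_top_stays_elected_on_subset: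
  assumes F: "consular_rule V A F" and spo: "SPO V A F"
    and P: "profile V A P" and Q: "profile V A Q" and aQ: "a \<in> F Q"
    and top: "\<forall>i\<in>V. \<forall>b\<in>A. (b, a) \<in> P i"
    and "finite S" and "S \<subseteq> V"
  shows "a \<in> F (\<lambda>i. if i \<in> S then P i else Q i)"
  using \<open>finite S\<close> \<open>S \<subseteq> V\<close>
proof (induction S rule: finite_induct)
  case empty
  with aQ show ?case by simp
next
  case (insert j S)
  let ?R = "\<lambda>i. if i \<in> S then P i else Q i"
  have j: "j \<in> V" using insert.prems by simp
  have Pj: "linear_order_on A (P j)" using P j unfolding profile_def by blast
  have "profile V A ?R" using P Q unfolding profile_def by auto
  moreover have "a \<in> F ?R" using insert by simp
  ultimately have "a \<in> F (?R(j := P j))"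
    using SPO_top_stays_elected[OF F spo _ _ j Pj] top j by blast
  moreover have "?R(j := P j) = (\<lambda>i. if i \<in> insert j S then P i else Q i)" by (rule ext) auto
  ultimately show ?case by simp
qed

theorem corollary11:
  fixes V :: "'v set" and A :: "'a set" and F :: "('v \<Rightarrow> 'a rel) \<Rightarrow> 'a set"
  assumes "finite V" and "V \<noteq> {}" and "finite A"
    and "consular_rule V A F"
    and "weakly_viable V A F"
    and "SPP V A F"
    and "SPO V A F"
  shows "unanimous V A F"
  unfolding unanimous_def
proof (intro allI impI)
  fix P a
  assume P: "profile V A P" and "a \<in> A" and top: "\<forall>i\<in>V. \<forall>b\<in>A. (b, a) \<in> P i"
  then obtain Q where Q: "profile V A Q" "a \<in> F Q"
    using assms(5) unfolding weakly_viable_def by blast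
  have "a \<in> F (\<lambda>i. if i \<in> V then P i else Q i)"
    using SPO_top_stays_elected_on_subset[OF assms(4,7) P Q top assms(1)] by blast
  moreover have "(\<lambda>i. if i \<in> V then P i else Q i) = P"
    using P Q(1) unfolding profile_def by (intro ext) auto
  ultimately show "a \<in> F P" by simp
qed

end
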